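(* Assume $0<h<1$, $2/h\notin\mathbb Z$ and $\lim_{\beta\to\infty}|\Lambda_{L_\beta}|e^{-2\beta}=0$. Then there exists a finite constant $C_0$ such that $$\frac{\mu_\beta(\mathscr V_{\mathbf{-1}}\setminus\{\mathbf{-1}\})}{\mu_\beta(\mathbf{-1})}\le C_0\,|\Lambda_L|\,e^{-2\beta}\quad\text{for all }\beta\ge C_0.$$ In particular this ratio tends to $0$ as $\beta\to\infty$.
   Context: Blume–Capel model. Fix $h\in(0,2)$, $n_0=\lfloor 2/h\rfloor$. For each $\beta>0$, $L=L_\beta$ is a positive integer (with $L_\beta\ge n_0(n_0+1)+2$), $\Lambda_L$ the two-dimensional discrete torus of side $L$, $\Omega_L=\{-1,0,1\}^{\Lambda_L}$. Hamiltonian $\mathbb H(\sigma)=\sum(\sigma(y)-\sigma(x))^2-h\sum_x\sigma(x)$, first sum over unordered nearest-neighbour pairs. $\mu_\beta(\sigma)=Z_\beta^{-1}e^{-\beta\mathbb H(\sigma)}$. $\sigma^{x,\pm}$: replace $\sigma(x)$ by $\sigma(x)\pm1$ modulo $3$ in $\{-1,0,1\}$. $\mathbf{-1}$ is the all-$(-1)$ configuration. $N(\sigma)=\#\{x:\sigma(x)\ne-1\}$. $\mathfrak R$ is the set of configurations equal to $0$ on a rectangle of sites with side lengths $n_0$ and $n_0+1$ (either orientation) and $-1$ elsewhere. The valley of $\mathbf{-1}$ is $\mathscr V_{\mathbf{-1}}=\{\sigma:N(\sigma)\le n_0(n_0+1)\}\cup\{\sigma^{x,\pm}:\sigma\in\mathfrak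 R,x\in\Lambda_L\}$. *)

theory Defs
  imports "HOL-Analysis.Analysis"
begin

type_synonym site = "nat \<times> nat"
type_synonym config = "site \<Rightarrow> int"

definition torus :: "nat \<Rightarrow> site set" where
  "torus L = {0..<L} \<times> {0..<L}"

definition nbrs :: "nat \<Rightarrow> site \<Rightarrow> site set" where
  "nbrs L x = {((fst x + 1) mod L, snd x), ((fst x + L - 1) mod L, snd x),
               (fst x, (snd x + 1) mod L), (fst x, (snd x + L - 1) mod L)} - {x}"

definition Omega :: "nat \<Rightarrow> config set" where
  "Omega L = {\<sigma>. (\<forall>x\<in>torus L. \<sigma> x \<in> {-1,0,1}) \<and> (\<forall>x. x \<notin> torus L \<longrightarrow> \<sigma> x = 0)}"

(* sum over unordered nearest-neighbour pairs = half the sum over ordered ones *)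
definition Ham :: "real \<Rightarrow> nat \<Rightarrow> config \<Rightarrow> real" where
  "Ham h L \<sigma> = (1/2) * (\<Sum>x\<in>torus L. \<Sum>y\<in>nbrs L x. real_of_int ((\<sigma> y - \<sigma> x)^2))
                 - h * (\<Sum>x\<in>torus L. real_of_int (\<sigma> x))"

definition Zpart :: "real \<Rightarrow> real \<Rightarrow> nat \<Rightarrow> real" where
  "Zpart h \<beta> L = (\<Sum>\<sigma>\<in>Omega L. exp (-\<beta> * Ham h L \<sigma>))"

definition mu :: "real \<Rightarrow> real \<Rightarrow> nat \<Rightarrow> config set \<Rightarrow> real" where
  "mu h \<beta> L A = (\<Sum>\<sigma>\<in>A \<inter> Omega L. exp (-\<beta> * Ham h L \<sigma>)) / Zpart h \<beta> L"

definition minus_one :: "nat \<Rightarrow> config" where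
  "minus_one L = (\<lambda>x. if x \<in> torus L then -1 else 0)"

definition spin_shift :: "int \<Rightarrow> int \<Rightarrow> int" where
  "spin_shift s v = ((v + 1 + s) mod 3) - 1"

definition flip :: "config \<Rightarrow> site \<Rightarrow> int \<Rightarrow> config" where
  "flip \<sigma> x s = \<sigma>(x := spin_shift s (\<sigma> x))"

definition Ncount :: "nat \<Rightarrow> config \<Rightarrow> nat" where
  "Ncount L \<sigma> = card {x\<in>torus L. \<sigma> x \<noteq> -1}"

definition n0 :: "real \<Rightarrow> nat" where
  "n0 h = nat \<lfloor>2 / h\<rfloor>"

definition rect :: "nat \<Rightarrow> nat \<Rightarrow> nat \<Rightarrow> nat \<Rightarrow> nat \<Rightarrow> site set" where
  "rect L a b w v = {((a + i) mod L, (b + j) mod L) | i j. i < w \<and> j < v}"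

definition Rset :: "real \<Rightarrow> nat \<Rightarrow> config set" where
  "Rset h L = {\<sigma>\<in>Omega L. \<exists>a<L. \<exists>b<L. \<exists>w v.
      ((w = n0 h \<and> v = n0 h + 1) \<or> (w = n0 h + 1 \<and> v = n0 h)) \<and>
      (\<forall>x\<in>torus L. \<sigma> x = (if x \<in> rect L a b w v then 0 else -1))}"

definition valley :: "real \<Rightarrow> nat \<Rightarrow> config set" where
  "valley h L = {\<sigma>\<in>Omega L. Ncount L \<sigma> \<le> n0 h * (n0 h + 1)}
     \<union> {flip \<sigma> x s | \<sigma> x s. \<sigma> \<in> Rset h L \<and> x \<in> torus L \<and> s \<in> {1, -1}}"

end

theory Submission
  imports Defs
begin

text \<open>Measure energies relative to the all-minus configuration. If fewer than \<open>L\<close> sites are not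
  minus, every row and every column meeting them carries at least two unsatisfied bonds. Hence a support of \<open>k \<le> n\<^sub>0 (n\<^sub>0 + 1)\<close>
  sites spanning \<open>r\<close> rows and \<open>c\<close> columns costs at least \<open>2 (r + c) - h k \<ge> 2\<close>, and a one-spin flip
  of a critical \<open>n\<^sub>0 \<times> (n\<^sub>0 + 1)\<close> rectangle costs at least \<open>4\<close>. The support of a subcritical
  configuration splits into connected clusters whose energies add; there are at most
  \<open>const \<cdot> |\<Lambda>|\<close> clusters, each of weight at most \<open>e\<^sup>-\<^sup>2\<^sup>\<beta>\<close>, so peeling off one cluster at a time bounds
  the total weight of the subcritical excitations by \<open>2 const |\<Lambda>| e\<^sup>-\<^sup>2\<^sup>\<beta>\<close>, while the flipped
  rectangles contribute at most \<open>4 |\<Lambda>|\<^sup>2 e\<^sup>-\<^sup>4\<^sup>\<beta>\<close>.\<close>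

lemma Suc_mod_eq_if: "(a::nat) < L \<Longrightarrow> Suc a mod L = (if Suc a = L then 0 else Suc a)"
  by (cases "Suc a = L") simp_all

lemma pred_mod_eq_if: "(a::nat) < L \<Longrightarrow> (a + L - Suc 0) mod L = (if a = 0 then L - 1 else a - 1)"
  by (cases a) (auto simp: mod_if)

lemma add_mod_inj:
  assumes "i < L" "i' < (L::nat)" "(a + i) mod L = (a + i') mod L"
  shows "i = i'"
proof -
  have le: "i = i'" if "i \<le> i'" "i' < L" "(a + i) mod L = (a + i') mod L" for i i'
  proof -
    have "L dvd i' - i" using mod_eq_dvd_iff_nat[of "a + i" "a + i'" L] that by simp
    then show ?thesis using that nat_dvd_not_less[of "i' - i" L] by linarith
  qed
  show ?thesis using le[of i i'] le[of i' i] assms by (cases "i \<le> i'") auto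
qed

definition east :: "nat \<Rightarrow> site \<Rightarrow> site" where "east L x = ((fst x + 1) mod L, snd x)"
definition west :: "nat \<Rightarrow> site \<Rightarrow> site" where "west L x = ((fst x + L - 1) mod L, snd x)"
definition north :: "nat \<Rightarrow> site \<Rightarrow> site" where "north L x = (fst x, (snd x + 1) mod L)"
definition south :: "nat \<Rightarrow> site \<Rightarrow> site" where "south L x = (fst x, (snd x + L - 1) mod L)"

lemma torus_steps_distinct:
  assumes "3 \<le> L" "x \<in> torus L"
  shows "east L x \<noteq> x" "west L x \<noteq> x" "north L x \<noteq> x" "south L x \<noteq> x"
    "east L x \<noteq> west L x" "east L x \<noteq> north L x" "east L x \<noteq> south L x"
    "west L x \<noteq> north L x" "west L x \<noteq> south L x" "north L x \<noteq> south L x"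
proof -
  obtain a b where x: "x = (a,b)" "a < L" "b < L" using assms(2) unfolding torus_def by auto
  have coord: "Suc c mod L \<noteq> c \<and> (c + L - Suc 0) mod L \<noteq> c \<and> Suc c mod L \<noteq> (c + L - Suc 0) mod L"
    if "c < L" for c
    unfolding Suc_mod_eq_if[OF that] pred_mod_eq_if[OF that] using that assms(1) by auto
  show "east L x \<noteq> x" "west L x \<noteq> x" "north L x \<noteq> x" "south L x \<noteq> x"
    "east L x \<noteq> west L x" "east L x \<noteq> north L x" "east L x \<noteq> south L x"
    "west L x \<noteq> north L x" "west L x \<noteq> south L x" "north L x \<noteq> south L x"
    using coord[OF x(2)] coord[OF x(3)] unfolding x east_def west_def north_def south_def by auto
qed

lemma sum_nbrs:
  assumes "3 \<le> L" "x \<in> torus L"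
  shows "(\<Sum>y\<in>nbrs L x. f y) = f (east L x) + f (west L x) + f (north L x) + f (south L x)"
proof -
  have "nbrs L x = {east L x, west L x, north L x, south L x}"
    using torus_steps_distinct[OF assms]
    unfolding nbrs_def east_def west_def north_def south_def by auto
  then show ?thesis using torus_steps_distinct[OF assms] by (simp add: add.assoc)
qed

lemma east_in_torus: "0 < L \<Longrightarrow> x \<in> torus L \<Longrightarrow> east L x \<in> torus L"
  and west_in_torus: "0 < L \<Longrightarrow> x \<in> torus L \<Longrightarrow> west L x \<in> torus L"
  and north_in_torus: "0 < L \<Longrightarrow> x \<in> torus L \<Longrightarrow> north L x \<in> torus L"
  and south_in_torus: "0 < L \<Longrightarrow> x \<in> torus L \<Longrightarrow> south L x \<in> torus L"
  unfolding east_def west_def north_def south_def torus_def by auto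

lemma west_east: "x \<in> torus L \<Longrightarrow> west L (east L x) = x"
  and east_west: "x \<in> torus L \<Longrightarrow> east L (west L x) = x"
  and south_north: "x \<in> torus L \<Longrightarrow> south L (north L x) = x"
  and north_south: "x \<in> torus L \<Longrightarrow> north L (south L x) = x"
  unfolding east_def west_def north_def south_def torus_def
  by (auto simp: Suc_mod_eq_if pred_mod_eq_if)

lemma bij_betw_east: "0 < L \<Longrightarrow> bij_betw (east L) (torus L) (torus L)"
  by (rule bij_betw_byWitness[where f'="west L"]) (auto simp: west_east east_west east_in_torus west_in_torus)

lemma bij_betw_north: "0 < L \<Longrightarrow> bij_betw (north L) (torus L) (torus L)"
  by (rule bij_betw_byWitness[where f'="south L"]) (auto simp: south_north north_south north_in_torus south_in_torus)

lemma nbrs_in_torus: "0 < L \<Longrightarrow> x \<in> torus L \<Longrightarrow> y \<in> nbrs L x \<Longrightarrow> y \<in> torus L"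
  unfolding nbrs_def torus_def by auto

lemma finite_torus [simp]: "finite (torus L)"
  by (simp add: torus_def)

lemma card_torus: "card (torus L) = L * L"
  by (simp add: torus_def card_cartesian_product)

lemma sum_torus_rows: "(\<Sum>x\<in>torus L. f x) = (\<Sum>b<L. \<Sum>a<L. f (a,b))"
  and sum_torus_columns: "(\<Sum>x\<in>torus L. f x) = (\<Sum>a<L. \<Sum>b<L. f (a,b))"
proof -
  show cols: "(\<Sum>x\<in>torus L. f x) = (\<Sum>a<L. \<Sum>b<L. f (a,b))"
    unfolding torus_def by (simp add: sum.cartesian_product lessThan_atLeast0)
  show "(\<Sum>x\<in>torus L. f x) = (\<Sum>b<L. \<Sum>a<L. f (a,b))"
    unfolding cols by (rule sum.swap)
qed

lemma Omega_vals: "\<sigma> \<in> Omega L \<Longrightarrow> x \<in> torus L \<Longrightarrow> \<sigma> x \<in> {-1,0,1}"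
  and Omega_off: "\<sigma> \<in> Omega L \<Longrightarrow> x \<notin> torus L \<Longrightarrow> \<sigma> x = 0"
  unfolding Omega_def by (auto, metis prod.collapse)

lemma minus_one_in_Omega: "minus_one L \<in> Omega L"
  unfolding minus_one_def Omega_def by auto

definition bond_energy :: "nat \<Rightarrow> config \<Rightarrow> int" where
  "bond_energy L \<sigma> = (\<Sum>x\<in>torus L. (\<sigma> (east L x) - \<sigma> x)^2) + (\<Sum>x\<in>torus L. (\<sigma> (north L x) - \<sigma> x)^2)"

lemma half_nbrs_sum_eq_bond_energy:
  assumes "3 \<le> L"
  shows "(1/2) * (\<Sum>x\<in>torus L. \<Sum>y\<in>nbrs L x. real_of_int ((\<sigma> y - \<sigma> x)^2)) = bond_energy L \<sigma>"
proof -
  let ?e = "\<lambda>x y. real_of_int ((\<sigma> y - \<sigma> x)^2)"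
  have L0: "0 < L" using assms by simp
  have west: "(\<Sum>x\<in>torus L. ?e x (west L x)) = (\<Sum>x\<in>torus L. ?e x (east L x))"
  proof -
    have "(\<Sum>x\<in>torus L. ?e x (west L x)) = (\<Sum>x\<in>torus L. ?e (east L x) (west L (east L x)))"
      using sum.reindex_bij_betw[OF bij_betw_east[OF L0], of "\<lambda>x. ?e x (west L x)"] by simp
    also have "\<dots> = (\<Sum>x\<in>torus L. ?e x (east L x))"
      by (rule sum.cong) (auto simp: west_east power2_commute)
    finally show ?thesis .
  qed
  have south: "(\<Sum>x\<in>torus L. ?e x (south L x)) = (\<Sum>x\<in>torus L. ?e x (north L x))"
  proof -
    have "(\<Sum>x\<in>torus L. ?e x (south L x)) = (\<Sum>x\<in>torus L. ?e (north L x) (south L (north L x)))"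
      using sum.reindex_bij_betw[OF bij_betw_north[OF L0], of "\<lambda>x. ?e x (south L x)"] by simp
    also have "\<dots> = (\<Sum>x\<in>torus L. ?e x (north L x))"
      by (rule sum.cong) (auto simp: south_north power2_commute)
    finally show ?thesis .
  qed
  have "(\<Sum>x\<in>torus L. \<Sum>y\<in>nbrs L x. ?e x y) = (\<Sum>x\<in>torus L. ?e x (east L x))
      + (\<Sum>x\<in>torus L. ?e x (west L x)) + (\<Sum>x\<in>torus L. ?e x (north L x)) + (\<Sum>x\<in>torus L. ?e x (south L x))"
    by (simp add: sum_nbrs[OF assms] sum.distrib)
  then show ?thesis
    unfolding bond_energy_def west south by simp
qed

definition excess_energy :: "real \<Rightarrow> nat \<Rightarrow> config \<Rightarrow> real" where
  "excess_energy h L \<sigma> = Ham h L \<sigma> - Ham h L (minus_one L)"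

lemma Ham_minus_one: "0 < L \<Longrightarrow> Ham h L (minus_one L) = h * real (card (torus L))"
  unfolding Ham_def minus_one_def by (simp add: nbrs_in_torus cong: sum.cong)

lemma excess_energy_eq_nbrs:
  assumes "0 < L"
  shows "excess_energy h L \<sigma> = (1/2) * (\<Sum>x\<in>torus L. \<Sum>y\<in>nbrs L x. real_of_int ((\<sigma> y - \<sigma> x)^2))
    - h * (\<Sum>x\<in>torus L. real_of_int (\<sigma> x + 1))"
  unfolding excess_energy_def Ham_minus_one[OF assms] by (simp add: Ham_def sum.distrib algebra_simps)

lemma excess_energy_eq_bonds:
  "3 \<le> L \<Longrightarrow> excess_energy h L \<sigma> = bond_energy L \<sigma> - h * (\<Sum>x\<in>torus L. real_of_int (\<sigma> x + 1))"
  using excess_energy_eq_nbrs[of L h \<sigma>] half_nbrs_sum_eq_bond_energy[of L \<sigma>] by simp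

definition support :: "nat \<Rightarrow> config \<Rightarrow> site set" where
  "support L \<sigma> = {x\<in>torus L. \<sigma> x \<noteq> -1}"

definition plus_sites :: "nat \<Rightarrow> config \<Rightarrow> site set" where
  "plus_sites L \<sigma> = {x\<in>torus L. \<sigma> x = 1}"

lemma finite_support [simp]: "finite (support L \<sigma>)"
  and finite_plus_sites [simp]: "finite (plus_sites L \<sigma>)"
  unfolding support_def plus_sites_def by auto

lemma support_subset_torus: "support L \<sigma> \<subseteq> torus L"
  unfolding support_def by auto

lemma plus_sites_subset_support: "plus_sites L \<sigma> \<subseteq> support L \<sigma>"
  unfolding support_def plus_sites_def by auto

lemma Ncount_eq_card_support: "Ncount L \<sigma> = card (support L \<sigma>)"
  unfolding Ncount_def support_def by simp

lemma support_minus_one: "support L (minus_one L) = {}"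
  unfolding support_def minus_one_def by auto

lemma support_empty_imp_minus_one: "\<sigma> \<in> Omega L \<Longrightarrow> support L \<sigma> = {} \<Longrightarrow> \<sigma> = minus_one L"
  unfolding support_def minus_one_def using Omega_off by fastforce

lemma sum_spin_plus_one:
  assumes "\<sigma> \<in> Omega L"
  shows "(\<Sum>x\<in>torus L. real_of_int (\<sigma> x + 1)) = real (card (support L \<sigma>)) + real (card (plus_sites L \<sigma>))"
proof -
  have "(\<Sum>x\<in>torus L. real_of_int (\<sigma> x + 1))
      = (\<Sum>x\<in>torus L. (if \<sigma> x \<noteq> -1 then 1 else 0) + (if \<sigma> x = 1 then 1 else 0))"
    by (rule sum.cong) (use Omega_vals[OF assms] in auto)
  then show ?thesis
    unfolding sum.distrib support_def plus_sites_def by (simp add: sum.If_cases Int_def)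
qed

section \<open>Bond energy and projections\<close>

lemma cycle_variation_ge_ordered:
  fixes g :: "nat \<Rightarrow> int"
  assumes "i \<le> j" "j < L"
  shows "2 * \<bar>g j - g i\<bar> \<le> (\<Sum>a<L. \<bar>g (Suc a mod L) - g a\<bar>)"
proof -
  define G where "G a = g (a mod L)" for a
  have var: "\<bar>G n - G m\<bar> \<le> (\<Sum>a\<in>{m..<n}. \<bar>G (Suc a) - G a\<bar>)" if "m \<le> n" for m n
    using sum_Suc_diff'[OF that, of G] sum_abs[of "\<lambda>a. G (Suc a) - G a" "{m..<n}"] by simp
  have "(\<Sum>a<L. \<bar>g (Suc a mod L) - g a\<bar>) = (\<Sum>a\<in>{0..<L}. \<bar>G (Suc a) - G a\<bar>)"
    by (rule sum.cong) (auto simp: G_def)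
  also have "\<dots> = (\<Sum>a\<in>{0..<i}. \<bar>G (Suc a) - G a\<bar>) + (\<Sum>a\<in>{i..<j}. \<bar>G (Suc a) - G a\<bar>)
      + (\<Sum>a\<in>{j..<L}. \<bar>G (Suc a) - G a\<bar>)"
    using assms by (simp add: sum.atLeastLessThan_concat)
  finally have "\<bar>G i - G 0\<bar> + \<bar>G j - G i\<bar> + \<bar>G L - G j\<bar> \<le> (\<Sum>a<L. \<bar>g (Suc a mod L) - g a\<bar>)"
    using var[of 0 i] var[of i j] var[of j L] assms by linarith
  moreover have "G 0 = g 0" "G L = g 0" "G i = g i" "G j = g j"
    using assms by (auto simp: G_def)
  moreover have "2 * \<bar>g j - g i\<bar> \<le> \<bar>g i - g 0\<bar> + \<bar>g j - g i\<bar> + \<bar>g 0 - g j\<bar>"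
    by arith
  ultimately show ?thesis by simp
qed

lemma cycle_variation_ge:
  fixes g :: "nat \<Rightarrow> int"
  assumes "i < L" "j < L"
  shows "2 * \<bar>g j - g i\<bar> \<le> (\<Sum>a<L. \<bar>g (Suc a mod L) - g a\<bar>)"
  using cycle_variation_ge_ordered[of i j L g] cycle_variation_ge_ordered[of j i L g] assms
  by (cases "i \<le> j") (simp_all add: abs_minus_commute)

lemma abs_le_square_int: "\<bar>d::int\<bar> \<le> d^2"
proof (cases "d = 0")
  case False
  then have "\<bar>d\<bar> * 1 \<le> \<bar>d\<bar> * \<bar>d\<bar>" by (intro mult_left_mono) auto
  then show ?thesis by (simp add: power2_eq_square abs_mult[symmetric])
qed simp

lemma line_energy_ge:
  fixes g :: "nat \<Rightarrow> int"
  assumes vals: "\<And>a. a < L \<Longrightarrow> g a \<in> {-1,0,1}" and i: "i < L" "g i = -1"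
  shows "2 * (if \<exists>a<L. g a \<noteq> -1 then 1 else 0) + 2 * (if \<exists>a<L. g a = 1 then 1 else 0)
     \<le> (\<Sum>a<L. (g (Suc a mod L) - g a)^2)"
proof -
  have "(\<Sum>a<L. \<bar>g (Suc a mod L) - g a\<bar>) \<le> (\<Sum>a<L. (g (Suc a mod L) - g a)^2)"
    by (rule sum_mono) (rule abs_le_square_int)
  then have var: "2 * \<bar>g j - g i\<bar> \<le> (\<Sum>a<L. (g (Suc a mod L) - g a)^2)" if "j < L" for j
    using cycle_variation_ge[OF i(1) that, of g] by linarith
  consider (plus) j where "j < L" "g j = 1" | (zero) j where "j < L" "g j = 0" "\<not> (\<exists>a<L. g a = 1)"
    | (minus) "\<not> (\<exists>a<L. g a \<noteq> -1)"
    using vals by blast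
  then show ?thesis
  proof cases
    case plus then show ?thesis using var[of j] i by auto
  next
    case zero then show ?thesis using var[of j] i by auto
  next
    case minus then show ?thesis by (auto intro: sum_nonneg)
  qed
qed

lemma lines_energy_ge:
  fixes g :: "nat \<Rightarrow> nat \<Rightarrow> int"
  assumes vals: "\<And>b a. b < L \<Longrightarrow> a < L \<Longrightarrow> g b a \<in> {-1,0,1}"
    and minus: "\<And>b. b < L \<Longrightarrow> \<exists>a<L. g b a = -1"
  shows "2 * int (card {b\<in>{..<L}. \<exists>a<L. g b a \<noteq> -1}) + 2 * int (card {b\<in>{..<L}. \<exists>a<L. g b a = 1})
     \<le> (\<Sum>b<L. \<Sum>a<L. (g b (Suc a mod L) - g b a)^2)"
proof -
  have "2 * int (card {b\<in>{..<L}. \<exists>a<L. g b a \<noteq> -1}) + 2 * int (card {b\<in>{..<L}. \<exists>a<L. g b a = 1})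
      = (\<Sum>b<L. 2 * (if \<exists>a<L. g b a \<noteq> -1 then 1 else 0) + 2 * (if \<exists>a<L. g b a = 1 then 1 else 0))"
    by (simp add: sum.distrib sum_distrib_left[symmetric] sum.If_cases Int_def conj_commute)
  also have "\<dots> \<le> (\<Sum>b<L. \<Sum>a<L. (g b (Suc a mod L) - g b a)^2)"
  proof (rule sum_mono)
    fix b assume "b \<in> {..<L}"
    then obtain i where "i < L" "g b i = -1" using minus by auto
    then show "2 * (if \<exists>a<L. g b a \<noteq> -1 then 1 else 0) + 2 * (if \<exists>a<L. g b a = 1 then 1 else 0)
        \<le> (\<Sum>a<L. (g b (Suc a mod L) - g b a)^2)"
      using \<open>b \<in> {..<L}\<close> by (intro line_energy_ge vals) auto
  qed
  finally show ?thesis .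
qed

lemma small_support_line_meets_minus:
  assumes "card (support L \<sigma>) < L" "inj_on f {..<L}" "f ` {..<L} \<subseteq> torus L"
  shows "\<exists>a<L. \<sigma> (f a) = -1"
proof (rule ccontr)
  assume "\<not> ?thesis"
  then have "f ` {..<L} \<subseteq> support L \<sigma>" using assms(3) unfolding support_def by auto
  then have "card (f ` {..<L}) \<le> card (support L \<sigma>)" by (intro card_mono) simp_all
  then show False using assms(1,2) by (simp add: card_image)
qed

lemma east_bonds_ge:
  assumes om: "\<sigma> \<in> Omega L" and small: "card (support L \<sigma>) < L"
  shows "2 * int (card (snd ` support L \<sigma>)) + 2 * int (card (snd ` plus_sites L \<sigma>))
     \<le> (\<Sum>x\<in>torus L. (\<sigma> (east L x) - \<sigma> x)^2)"
proof -
  have "{b\<in>{..<L}. \<exists>a<L. \<sigma> (a,b) \<noteq> -1} = snd ` support L \<sigma>"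
    "{b\<in>{..<L}. \<exists>a<L. \<sigma> (a,b) = 1} = snd ` plus_sites L \<sigma>"
    unfolding support_def plus_sites_def torus_def by force+
  moreover have "\<exists>a<L. \<sigma> (a,b) = -1" if "b < L" for b
    using that by (intro small_support_line_meets_minus[OF small]) (auto simp: inj_on_def torus_def)
  moreover have "\<sigma> (a,b) \<in> {-1,0,1}" if "b < L" "a < L" for a b
    using that Omega_vals[OF om] by (simp add: torus_def)
  moreover have "(\<Sum>x\<in>torus L. (\<sigma> (east L x) - \<sigma> x)^2)
      = (\<Sum>b<L. \<Sum>a<L. (\<sigma> (Suc a mod L, b) - \<sigma> (a,b))^2)"
    by (simp add: sum_torus_rows east_def)
  ultimately show ?thesis
    using lines_energy_ge[of L "\<lambda>b a. \<sigma> (a,b)"] by simp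
qed

lemma north_bonds_ge:
  assumes om: "\<sigma> \<in> Omega L" and small: "card (support L \<sigma>) < L"
  shows "2 * int (card (fst ` support L \<sigma>)) + 2 * int (card (fst ` plus_sites L \<sigma>))
     \<le> (\<Sum>x\<in>torus L. (\<sigma> (north L x) - \<sigma> x)^2)"
proof -
  have "{a\<in>{..<L}. \<exists>b<L. \<sigma> (a,b) \<noteq> -1} = fst ` support L \<sigma>"
    "{a\<in>{..<L}. \<exists>b<L. \<sigma> (a,b) = 1} = fst ` plus_sites L \<sigma>"
    unfolding support_def plus_sites_def torus_def by force+
  moreover have "\<exists>b<L. \<sigma> (a,b) = -1" if "a < L" for a
    using that by (intro small_support_line_meets_minus[OF small]) (auto simp: inj_on_def torus_def)
  moreover have "\<sigma> (a,b) \<in> {-1,0,1}" if "a < L" "b < L" for a b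
    using that Omega_vals[OF om] by (simp add: torus_def)
  moreover have "(\<Sum>x\<in>torus L. (\<sigma> (north L x) - \<sigma> x)^2)
      = (\<Sum>a<L. \<Sum>b<L. (\<sigma> (a, Suc b mod L) - \<sigma> (a,b))^2)"
    by (simp add: sum_torus_columns north_def)
  ultimately show ?thesis
    using lines_energy_ge[of L "\<lambda>a b. \<sigma> (a,b)"] by simp
qed

text \<open>Every row and every column meeting the support carries at least two unsatisfied bonds,
  and two more if it contains a plus spin.\<close>

lemma excess_energy_ge_projections:
  assumes L3: "3 \<le> L" and om: "\<sigma> \<in> Omega L" and small: "card (support L \<sigma>) < L"
  shows "excess_energy h L \<sigma>
     \<ge> 2 * (real (card (fst ` support L \<sigma>)) + real (card (snd ` support L \<sigma>)))
       + 2 * (real (card (fst ` plus_sites L \<sigma>)) + real (card (snd ` plus_sites L \<sigma>)))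
       - h * (real (card (support L \<sigma>)) + real (card (plus_sites L \<sigma>)))"
proof -
  have "2 * (int (card (fst ` support L \<sigma>)) + int (card (snd ` support L \<sigma>)))
      + 2 * (int (card (fst ` plus_sites L \<sigma>)) + int (card (snd ` plus_sites L \<sigma>))) \<le> bond_energy L \<sigma>"
    using add_mono[OF east_bonds_ge[OF om small] north_bonds_ge[OF om small]]
    unfolding bond_energy_def by (simp add: algebra_simps)
  then have "2 * (real (card (fst ` support L \<sigma>)) + real (card (snd ` support L \<sigma>)))
      + 2 * (real (card (fst ` plus_sites L \<sigma>)) + real (card (snd ` plus_sites L \<sigma>)))
      \<le> real_of_int (bond_energy L \<sigma>)"
    by (metis (mono_tags, lifting) of_int_add of_int_le_iff of_int_mult of_int_numeral of_int_of_nat_eq)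
  then show ?thesis
    unfolding excess_energy_eq_bonds[OF L3] sum_spin_plus_one[OF om] by linarith
qed

section \<open>Isoperimetric estimates\<close>

lemma card_le_card_fst_times_card_snd: "finite X \<Longrightarrow> card X \<le> card (fst ` X) * card (snd ` X)"
proof -
  assume "finite X"
  moreover have "X \<subseteq> fst ` X \<times> snd ` X" by force
  ultimately have "card X \<le> card (fst ` X \<times> snd ` X)" by (intro card_mono) auto
  then show ?thesis by (simp add: card_cartesian_product)
qed

lemma square_lt_four_times_imp_lt_add:
  fixes r c k m :: nat
  assumes "m * m < 4 * k" "k \<le> r * c"
  shows "m < r + c"
proof (rule ccontr)
  assume "\<not> m < r + c"
  then have "(r + c) * (r + c) \<le> m * m" by (intro mult_mono) auto
  moreover have "4 * (int r * int c) \<le> (int r + int c) * (int r + int c)"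
    using zero_le_power2[of "int r - int c"] by (simp add: power2_eq_square algebra_simps)
  then have "4 * (r * c) \<le> (r + c) * (r + c)"
    by (metis of_nat_add of_nat_le_iff of_nat_mult of_nat_numeral)
  ultimately show False using assms by linarith
qed

lemma field_times_critical_area_le:
  assumes "0 \<le> h" "h * n \<le> 2"
  shows "h * real (n * (n + 1)) \<le> 2 * (real n + 1)"
proof -
  have "h * real (n * (n + 1)) = (h * n) * (real n + 1)" by (simp add: algebra_simps)
  also have "\<dots> \<le> 2 * (real n + 1)" using assms by (intro mult_right_mono) auto
  finally show ?thesis .
qed

text \<open>A set of at most \<open>n (n + 1)\<close> sites, \<open>n = \<lfloor>2/h\<rfloor>\<close>, has larger perimeter than field gain:
  if it spans at most \<open>n\<close> rows, each row gains at most \<open>h n \<le> 2\<close>.\<close>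

lemma field_gain_lt_perimeter:
  fixes h :: real and r c k n :: nat
  assumes h: "0 \<le> h" "h * n \<le> 2" and k: "1 \<le> k" "k \<le> r * c" "k \<le> n * (n + 1)"
  shows "h * k + 2 \<le> 2 * (real r + real c)"
proof -
  have "0 < r * c" using k by linarith
  then have "0 < r" "0 < c" by simp_all
  have hk: "h * k \<le> h * real r * real c" "h * k \<le> h * real (n * (n + 1))"
    using k h by (auto simp: mult.assoc of_nat_mult[symmetric] simp del: of_nat_mult intro: mult_left_mono)
  consider "r \<le> n" | "c \<le> n" | "n + 1 \<le> r" "n + 1 \<le> c" by linarith
  then show ?thesis
  proof cases
    case 1
    then have "h * r \<le> 2" using h by (meson mult_left_mono of_nat_le_iff order.trans)
    then have "h * r * c \<le> 2 * real c" by (intro mult_right_mono) auto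
    moreover have "1 \<le> real r" using \<open>0 < r\<close> by simp
    ultimately show ?thesis using hk(1) by argo
  next
    case 2
    then have "h * c \<le> 2" using h by (meson mult_left_mono of_nat_le_iff order.trans)
    then have "h * c * r \<le> 2 * real r" by (intro mult_right_mono) auto
    moreover have "1 \<le> real c" using \<open>0 < c\<close> by simp
    ultimately show ?thesis using hk by (simp add: algebra_simps)
  next
    case 3
    then have "real n + 1 \<le> real r" "real n + 1 \<le> real c" "0 \<le> real n" by simp_all
    then show ?thesis using hk(2) field_times_critical_area_le[OF h] by argo
  qed
qed

lemma excess_energy_ge_2:
  fixes n :: nat and h :: real
  assumes L3: "3 \<le> L" and om: "\<sigma> \<in> Omega L" and small: "card (support L \<sigma>) < L"
    and ne: "1 \<le> card (support L \<sigma>)" and sub: "card (support L \<sigma>) \<le> n * (n + 1)"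
    and h: "0 \<le> h" "h * n \<le> 2"
  shows "2 \<le> excess_energy h L \<sigma>"
proof -
  let ?S = "support L \<sigma>" and ?P = "plus_sites L \<sigma>"
  have S: "h * card ?S + 2 \<le> 2 * (real (card (fst ` ?S)) + real (card (snd ` ?S)))"
    using ne sub card_le_card_fst_times_card_snd[of ?S] by (intro field_gain_lt_perimeter[OF h]) auto
  have P: "h * card ?P \<le> 2 * (real (card (fst ` ?P)) + real (card (snd ` ?P)))"
  proof (cases "card ?P = 0")
    case False
    have "card ?P \<le> card ?S" by (intro card_mono plus_sites_subset_support) simp
    moreover have "1 \<le> card ?P" using False by linarith
    ultimately have "h * card ?P + 2 \<le> 2 * (real (card (fst ` ?P)) + real (card (snd ` ?P)))"
      using sub card_le_card_fst_times_card_snd[of ?P] by (intro field_gain_lt_perimeter[OF h]) auto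
    then show ?thesis by simp
  qed simp
  show ?thesis using excess_energy_ge_projections[OF L3 om small, of h] S P by (simp add: algebra_simps)
qed

text \<open>The three cases are the supports reachable from a critical rectangle by one spin flip:
  adding a minus neighbour, raising a rectangle site to \<open>+1\<close>, or lowering it to \<open>-1\<close>.\<close>

lemma excess_energy_ge_4:
  fixes n :: nat and h :: real
  assumes L3: "3 \<le> L" and om: "\<sigma> \<in> Omega L" and small: "card (support L \<sigma>) < L"
    and h: "0 \<le> h" "h \<le> 1" "h * n \<le> 2" and n2: "2 \<le> n"
    and cases: "(card (support L \<sigma>) = n * (n + 1) + 1 \<and> card (plus_sites L \<sigma>) \<le> 1)
      \<or> (card (support L \<sigma>) = n * (n + 1) \<and> card (plus_sites L \<sigma>) = 1)
      \<or> (card (support L \<sigma>) = n * (n + 1) - 1 \<and> card (plus_sites L \<sigma>) = 0)"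
  shows "4 \<le> excess_energy h L \<sigma>"
proof -
  let ?S = "support L \<sigma>" and ?P = "plus_sites L \<sigma>"
  define k where "k = card ?S"
  define p where "p = card ?P"
  define r where "r = card (fst ` ?S)"
  define c where "c = card (snd ` ?S)"
  define rp where "rp = card (fst ` ?P)"
  define cp where "cp = card (snd ` ?P)"
  have excess: "excess_energy h L \<sigma> \<ge> 2 * (real r + real c) + 2 * (real rp + real cp) - h * (real k + real p)"
    using excess_energy_ge_projections[OF L3 om small, of h] unfolding k_def p_def r_def c_def rp_def cp_def .
  have kr: "k \<le> r * c" unfolding k_def r_def c_def by (rule card_le_card_fst_times_card_snd) simp
  have hK: "h * real (n * (n + 1)) \<le> 2 * real n + 2" using field_times_critical_area_le[OF h(1,3)] by simp
  from cases[folded k_def p_def] consider (grown) "k = n * (n + 1) + 1" "p \<le> 1" | (raised) "k = n * (n + 1)" "p = 1"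
    | (shrunk) "k = n * (n + 1) - 1" "p = 0"
    by blast
  then show ?thesis
  proof cases
    case grown
    have "(2 * n + 1) * (2 * n + 1) < 4 * k" unfolding grown(1) by (simp add: algebra_simps)
    then have "2 * n + 2 \<le> r + c" using square_lt_four_times_imp_lt_add[OF _ kr] by fastforce
    then have rc: "2 * real n + 2 \<le> real r + real c" by linarith
    have "h * real p \<le> h" using grown(2) h(1) mult_left_mono[of "real p" 1 h] by simp
    moreover have "h * (real k + real p) = h * real (n * (n + 1)) + h + h * real p"
      unfolding grown(1) by (simp add: algebra_simps)
    ultimately have "h * (real k + real p) \<le> 2 * real n + 4" using hK h by linarith
    moreover note rc
    moreover have "2 \<le> real n" "0 \<le> real rp + real cp" using n2 by simp_all
    ultimately show ?thesis using excess by argo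
  next
    case raised
    have "(2 * n) * (2 * n) < 4 * k" unfolding raised(1) using n2 by (simp add: algebra_simps)
    then have "2 * n + 1 \<le> r + c" using square_lt_four_times_imp_lt_add[OF _ kr] by fastforce
    then have "2 * real n + 1 \<le> real r + real c" by linarith
    moreover have "?P \<noteq> {}" using raised(2) unfolding p_def by auto
    then have "1 \<le> real rp" "1 \<le> real cp" unfolding rp_def cp_def by (auto simp: Suc_le_eq card_gt_0_iff)
    moreover have "h * (real k + real p) = h * real (n * (n + 1)) + h"
      unfolding raised by (simp add: algebra_simps)
    moreover have "2 \<le> real n" using n2 by simp
    ultimately show ?thesis using excess hK h by argo
  next
    case shrunk
    have "k + 1 = n * (n + 1)" using shrunk(1) n2 by (simp add: Suc_le_eq)
    then have "(2 * n) * (2 * n) < 4 * k" using n2 by (simp add: algebra_simps)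
    then have "2 * n + 1 \<le> r + c" using square_lt_four_times_imp_lt_add[OF _ kr] by fastforce
    then have "2 * real n + 1 \<le> real r + real c" by linarith
    moreover have "k + p \<le> n * (n + 1)" using shrunk by simp
    then have "h * (real k + real p) \<le> h * real (n * (n + 1))"
      using h(1) by (intro mult_left_mono) (simp_all only: of_nat_add[symmetric] of_nat_le_iff)
    moreover have "2 \<le> real n" "0 \<le> real rp + real cp" using n2 by simp_all
    ultimately show ?thesis using excess hK by argo
  qed
qed

definition rect_config :: "nat \<Rightarrow> nat \<Rightarrow> nat \<Rightarrow> nat \<Rightarrow> nat \<Rightarrow> config" where
  "rect_config L a b w v = (\<lambda>y. if y \<in> torus L then (if y \<in> rect L a b w v then 0 else -1) else 0)"

lemma Rset_imp_rect_config:
  assumes "\<sigma> \<in> Rset h L"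
  obtains a b w v where "a < L" "b < L" "(w = n0 h \<and> v = n0 h + 1) \<or> (w = n0 h + 1 \<and> v = n0 h)"
    "\<sigma> = rect_config L a b w v"
proof -
  from assms obtain a b w v where ab: "a < L" "b < L" "(w = n0 h \<and> v = n0 h + 1) \<or> (w = n0 h + 1 \<and> v = n0 h)"
    and om: "\<sigma> \<in> Omega L" and eq: "\<forall>x\<in>torus L. \<sigma> x = (if x \<in> rect L a b w v then 0 else -1)"
    unfolding Rset_def by blast
  have "\<sigma> = rect_config L a b w v"
    using eq Omega_off[OF om] unfolding rect_config_def by auto
  then show ?thesis using ab that by blast
qed

lemma rect_subset_torus: "0 < L \<Longrightarrow> rect L a b w v \<subseteq> torus L"
  unfolding rect_def torus_def by auto

lemma card_rect:
  assumes "w \<le> L" "v \<le> L"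
  shows "card (rect L a b w v) = w * v"
proof -
  let ?f = "\<lambda>(i, j). ((a + i) mod L, (b + j) mod L)"
  have "rect L a b w v = ?f ` ({..<w} \<times> {..<v})"
    unfolding rect_def by auto
  moreover have "inj_on ?f ({..<w} \<times> {..<v})"
  proof (rule inj_onI)
    fix p q assume "p \<in> {..<w} \<times> {..<v}" "q \<in> {..<w} \<times> {..<v}" "?f p = ?f q"
    moreover obtain i j i' j' where "p = (i, j)" "q = (i', j')" by fastforce
    ultimately show "p = q"
      using assms add_mod_inj[of i L i' a] add_mod_inj[of j L j' b] by simp
  qed
  ultimately show ?thesis by (simp add: card_image card_cartesian_product)
qed

lemma spin_shift_values:
  "spin_shift 1 (-1) = 0" "spin_shift (-1) (-1) = 1" "spin_shift 1 0 = 1" "spin_shift (-1) 0 = -1"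
  unfolding spin_shift_def by simp_all

lemma excess_energy_flip_rect_ge_4:
  fixes h :: real and n :: nat
  assumes L: "n * (n + 1) + 2 \<le> L" and n2: "2 \<le> n" and h: "0 \<le> h" "h \<le> 1" "h * n \<le> 2"
    and wv: "(w = n \<and> v = n + 1) \<or> (w = n + 1 \<and> v = n)"
    and x: "x \<in> torus L" and s: "s \<in> {1, -1}"
  shows "4 \<le> excess_energy h L (flip (rect_config L a b w v) x s)"
proof -
  define R where "R = rect L a b w v"
  define \<tau> where "\<tau> = flip (rect_config L a b w v) x s"
  have L3: "3 \<le> L" and L0: "0 < L" using L n2 by (auto simp: algebra_simps)
  have R: "R \<subseteq> torus L" using rect_subset_torus[OF L0] by (simp add: R_def)
  have "w \<le> L" "v \<le> L" using wv L n2 by (auto simp: algebra_simps)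
  then have cR: "card R = n * (n + 1)" unfolding R_def using card_rect wv by auto
  have fR: "finite R" using R by (rule finite_subset) simp
  have \<tau>: "\<tau> y = (if y = x then spin_shift s (if x \<in> R then 0 else -1)
      else if y \<in> torus L then (if y \<in> R then 0 else -1) else 0)" for y
    using x unfolding \<tau>_def flip_def rect_config_def R_def by simp
  have om: "\<tau> \<in> Omega L"
    unfolding Omega_def using x by (auto simp: \<tau> spin_shift_def)
  have ge4: "4 \<le> excess_energy h L \<tau>"
    if "card (support L \<tau>) \<le> n * (n + 1) + 1" and "(card (support L \<tau>) = n * (n + 1) + 1 \<and> card (plus_sites L \<tau>) \<le> 1)
      \<or> (card (support L \<tau>) = n * (n + 1) \<and> card (plus_sites L \<tau>) = 1)
      \<or> (card (support L \<tau>) = n * (n + 1) - 1 \<and> card (plus_sites L \<tau>) = 0)"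
    using that L by (intro excess_energy_ge_4[OF L3 om _ h n2]) auto
  consider (outside) "x \<notin> R" | (raise) "x \<in> R" "s = 1" | (lower) "x \<in> R" "s = -1" using s by auto
  then have "4 \<le> excess_energy h L \<tau>"
  proof cases
    case outside
    have "support L \<tau> = insert x R" using R x outside s
      unfolding support_def by (auto simp: \<tau> spin_shift_values)
    moreover have "plus_sites L \<tau> \<subseteq> {x}"
      unfolding plus_sites_def using R by (auto simp: \<tau>)
    then have "card (plus_sites L \<tau>) \<le> 1" using card_mono[of "{x}"] by fastforce
    ultimately show ?thesis using ge4 outside fR cR by simp
  next
    case raise
    have "support L \<tau> = R" "plus_sites L \<tau> = {x}" using R x raise
      unfolding support_def plus_sites_def by (auto simp: \<tau> spin_shift_values)
    then show ?thesis using ge4 cR by simp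
  next
    case lower
    have "support L \<tau> = R - {x}" "plus_sites L \<tau> = {}" using R x lower
      unfolding support_def plus_sites_def by (auto simp: \<tau> spin_shift_values)
    then show ?thesis using ge4 cR fR lower by simp
  qed
  then show ?thesis unfolding \<tau>_def .
qed

section \<open>Cluster decomposition\<close>

definition adjacent :: "nat \<Rightarrow> site set \<Rightarrow> site rel" where
  "adjacent L S = {(u, v). u \<in> S \<and> v \<in> S \<and> (v \<in> nbrs L u \<or> u \<in> nbrs L v)}"

definition component :: "nat \<Rightarrow> site set \<Rightarrow> site \<Rightarrow> site set" where
  "component L S x = (adjacent L S)\<^sup>* `` {x}"

definition restrict_config :: "nat \<Rightarrow> config \<Rightarrow> site set \<Rightarrow> config" where
  "restrict_config L \<sigma> X = (\<lambda>y. if y \<in> X then \<sigma> y else if y \<in> torus L then -1 else 0)"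

lemma component_subset: "x \<in> S \<Longrightarrow> component L S x \<subseteq> S"
proof
  fix y assume "x \<in> S" "y \<in> component L S x"
  then have "(x, y) \<in> (adjacent L S)\<^sup>*" "x \<in> S" by (simp_all add: component_def)
  then show "y \<in> S" by (induct rule: rtrancl_induct) (auto simp: adjacent_def)
qed

lemma self_in_component: "x \<in> component L S x"
  by (simp add: component_def)

lemma component_closed:
  assumes "x \<in> S" "y \<in> component L S x" "z \<in> S" "z \<in> nbrs L y \<or> y \<in> nbrs L z"
  shows "z \<in> component L S x"
proof -
  have "(y, z) \<in> adjacent L S"
    using assms component_subset[OF assms(1)] unfolding adjacent_def by auto
  then show ?thesis using assms(2) unfolding component_def by (auto intro: rtrancl_into_rtrancl)
qed

lemma restrict_config_in_Omega: "\<sigma> \<in> Omega L \<Longrightarrow> X \<subseteq> torus L \<Longrightarrow> restrict_config L \<sigma> X \<in> Omega L"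
  unfolding Omega_def restrict_config_def by auto

lemma support_restrict_config: "X \<subseteq> support L \<sigma> \<Longrightarrow> support L (restrict_config L \<sigma> X) = X"
  unfolding support_def restrict_config_def by auto

lemma restrict_config_recombine:
  assumes "\<sigma> \<in> Omega L" "A \<subseteq> support L \<sigma>"
  shows "\<sigma> = (\<lambda>y. if restrict_config L \<sigma> A y \<noteq> -1 then restrict_config L \<sigma> A y
                 else restrict_config L \<sigma> (support L \<sigma> - A) y)"
  using assms Omega_off[OF assms(1)] unfolding restrict_config_def support_def by fastforce

text \<open>A union of connected components of the support interacts with the rest only through
  bonds whose both ends are minus, so the excess energy is additive.\<close>

lemma excess_energy_split:
  assumes L0: "0 < L" and om: "\<sigma> \<in> Omega L" and AS: "A \<subseteq> support L \<sigma>"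
    and closed: "\<And>y z. y \<in> A \<Longrightarrow> z \<in> support L \<sigma> \<Longrightarrow> z \<in> nbrs L y \<or> y \<in> nbrs L z \<Longrightarrow> z \<in> A"
  shows "excess_energy h L \<sigma>
    = excess_energy h L (restrict_config L \<sigma> A) + excess_energy h L (restrict_config L \<sigma> (support L \<sigma> - A))"
proof -
  let ?a = "restrict_config L \<sigma> A" and ?b = "restrict_config L \<sigma> (support L \<sigma> - A)"
  have pt: "?a x = (if x \<in> A then \<sigma> x else -1)" "?b x = (if x \<in> support L \<sigma> - A then \<sigma> x else -1)"
    "x \<notin> support L \<sigma> \<Longrightarrow> \<sigma> x = -1" if "x \<in> torus L" for x
    using that AS unfolding restrict_config_def support_def by auto
  have bond: "(\<sigma> y - \<sigma> x)^2 = (?a y - ?a x)^2 + (?b y - ?b x)^2" if x: "x \<in> torus L" and y: "y \<in> nbrs L x" for x y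
  proof -
    have "y \<in> torus L" using nbrs_in_torus[OF L0 x y] .
    then show ?thesis using pt[OF x] pt[of y] closed[of x y] closed[of y x] y AS
      by (cases "y \<in> support L \<sigma>"; cases "x \<in> support L \<sigma>"; auto simp: power2_eq_square)
  qed
  have field: "\<sigma> x + 1 = (?a x + 1) + (?b x + 1)" if "x \<in> torus L" for x
    using pt[OF that] AS by auto
  have bonds: "(\<Sum>x\<in>torus L. \<Sum>y\<in>nbrs L x. real_of_int ((\<sigma> y - \<sigma> x)^2))
      = (\<Sum>x\<in>torus L. \<Sum>y\<in>nbrs L x. real_of_int ((?a y - ?a x)^2))
      + (\<Sum>x\<in>torus L. \<Sum>y\<in>nbrs L x. real_of_int ((?b y - ?b x)^2))"
    by (simp add: bond sum.distrib cong: sum.cong)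
  have fields: "(\<Sum>x\<in>torus L. real_of_int (\<sigma> x + 1))
      = (\<Sum>x\<in>torus L. real_of_int (?a x + 1)) + (\<Sum>x\<in>torus L. real_of_int (?b x + 1))"
    by (simp add: field sum.distrib[symmetric] cong: sum.cong)
  show ?thesis
    unfolding excess_energy_eq_nbrs[OF L0] bonds fields by (simp add: algebra_simps)
qed

definition torus_box :: "nat \<Rightarrow> site \<Rightarrow> nat \<Rightarrow> site set" where
  "torus_box L x n = {y. \<exists>i j::int. \<bar>i\<bar> \<le> int n \<and> \<bar>j\<bar> \<le> int n
      \<and> int (fst y) = (int (fst x) + i) mod int L \<and> int (snd y) = (int (snd x) + j) mod int L}"

lemma torus_box_mono: "m \<le> n \<Longrightarrow> torus_box L x m \<subseteq> torus_box L x n"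
  unfolding torus_box_def by force

lemma self_in_torus_box: "x \<in> torus L \<Longrightarrow> x \<in> torus_box L x n"
  unfolding torus_box_def torus_def by (intro CollectI exI[of _ 0]) auto

lemma torus_box_trans: "y \<in> torus_box L x m \<Longrightarrow> z \<in> torus_box L y n \<Longrightarrow> z \<in> torus_box L x (m + n)"
proof -
  assume "y \<in> torus_box L x m" "z \<in> torus_box L y n"
  then obtain i j i' j' where ij: "\<bar>i\<bar> \<le> int m" "\<bar>j\<bar> \<le> int m" "\<bar>i'\<bar> \<le> int n" "\<bar>j'\<bar> \<le> int n"
    and y: "int (fst y) = (int (fst x) + i) mod int L" "int (snd y) = (int (snd x) + j) mod int L"
    and z: "int (fst z) = (int (fst y) + i') mod int L" "int (snd z) = (int (snd y) + j') mod int L"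
    unfolding torus_box_def by blast
  have "int (fst z) = (int (fst x) + (i + i')) mod int L" "int (snd z) = (int (snd x) + (j + j')) mod int L"
    unfolding z y by (simp_all add: mod_add_left_eq add.assoc)
  moreover have "\<bar>i + i'\<bar> \<le> int (m + n)" "\<bar>j + j'\<bar> \<le> int (m + n)"
    using ij by simp_all
  ultimately show ?thesis unfolding torus_box_def by blast
qed

lemma torus_box_sym:
  assumes "x \<in> torus L" "y \<in> torus_box L x n"
  shows "x \<in> torus_box L y n"
proof -
  have undo: "((c + k) mod int L - k) mod int L = c mod int L" for c k :: int
    by (simp add: mod_diff_left_eq)
  obtain i j where ij: "\<bar>i\<bar> \<le> int n" "\<bar>j\<bar> \<le> int n"
    and y: "int (fst y) = (int (fst x) + i) mod int L" "int (snd y) = (int (snd x) + j) mod int L"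
    using assms(2) unfolding torus_box_def by blast
  have "int (fst x) mod int L = int (fst x)" "int (snd x) mod int L = int (snd x)"
    using assms(1) unfolding torus_def by auto
  then have "int (fst x) = (int (fst y) + - i) mod int L" "int (snd x) = (int (snd y) + - j) mod int L"
    unfolding y using undo by simp_all
  moreover have "\<bar>- i\<bar> \<le> int n" "\<bar>- j\<bar> \<le> int n" using ij by simp_all
  ultimately show ?thesis unfolding torus_box_def by blast
qed

lemma nbrs_in_unit_box:
  assumes L0: "0 < L" and u: "u \<in> torus L" and v: "v \<in> nbrs L u"
  shows "v \<in> torus_box L u 1"
proof -
  obtain a b where ab: "u = (a, b)" "a < L" "b < L" using u unfolding torus_def by auto
  have succ: "int (Suc c mod L) = (int c + 1) mod int L" for c
    by (simp add: of_nat_mod add.commute)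
  have pred: "int ((c + L - Suc 0) mod L) = (int c - 1) mod int L" for c
  proof -
    have "int (c + L - Suc 0) = (int c - 1) + int L" using L0 by simp
    then show ?thesis by (simp add: of_nat_mod)
  qed
  have same: "int c = (int c + 0) mod int L" if "c < L" for c
    using that by simp
  from v ab consider "v = (Suc a mod L, b)" | "v = ((a + L - Suc 0) mod L, b)"
    | "v = (a, Suc b mod L)" | "v = (a, (b + L - Suc 0) mod L)"
    unfolding nbrs_def by auto
  then show ?thesis
  proof cases
    case 1 then show ?thesis unfolding torus_box_def ab(1)
      using same[OF ab(3)] succ[of a] by (intro CollectI exI[of _ 1] exI[of _ 0]) simp
  next
    case 2 then show ?thesis unfolding torus_box_def ab(1)
      using same[OF ab(3)] pred[of a] by (intro CollectI exI[of _ "-1"] exI[of _ 0]) simp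
  next
    case 3 then show ?thesis unfolding torus_box_def ab(1)
      using same[OF ab(2)] succ[of b] by (intro CollectI exI[of _ 0] exI[of _ 1]) simp
  next
    case 4 then show ?thesis unfolding torus_box_def ab(1)
      using same[OF ab(2)] pred[of b] by (intro CollectI exI[of _ 0] exI[of _ "-1"]) simp
  qed
qed

lemma relpow_adjacent_in_torus_box:
  assumes L0: "0 < L" and S: "S \<subseteq> torus L" and x: "x \<in> torus L"
  shows "(x, y) \<in> (adjacent L S) ^^ n \<Longrightarrow> y \<in> torus_box L x n"
proof (induct n arbitrary: y)
  case 0
  then show ?case using self_in_torus_box[OF x] by simp
next
  case (Suc n)
  then obtain z where xz: "(x, z) \<in> (adjacent L S) ^^ n" and zy: "(z, y) \<in> adjacent L S" by auto
  have "z \<in> torus L" "y \<in> torus L" using zy S unfolding adjacent_def by auto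
  then have "y \<in> torus_box L z 1"
    using zy nbrs_in_unit_box[OF L0] torus_box_sym[of y L z 1] unfolding adjacent_def by blast
  then have "y \<in> torus_box L x (n + 1)" by (rule torus_box_trans[OF Suc.hyps[OF xz]])
  then show ?case by simp
qed

lemma component_subset_torus_box:
  assumes L0: "0 < L" and S: "S \<subseteq> torus L" and x: "x \<in> S"
  shows "component L S x \<subseteq> torus_box L x (card S * card S)"
proof
  fix y assume "y \<in> component L S x"
  then obtain k where "(x, y) \<in> (adjacent L S) ^^ k"
    unfolding component_def using rtrancl_power by blast
  have fS: "finite S" using S by (rule finite_subset) simp
  have AS: "adjacent L S \<subseteq> S \<times> S" unfolding adjacent_def by auto
  then have fA: "finite (adjacent L S)" using fS finite_subset by blast
  obtain m where m: "m \<le> card (adjacent L S)" "(x, y) \<in> (adjacent L S) ^^ m"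
    using relpow_finite_bounded[OF fA] \<open>(x, y) \<in> (adjacent L S) ^^ k\<close> by blast
  have "card (adjacent L S) \<le> card S * card S"
    using card_mono[OF _ AS] fS by (simp add: card_cartesian_product)
  then have "m \<le> card S * card S" using m(1) by linarith
  moreover have "y \<in> torus_box L x m"
    using relpow_adjacent_in_torus_box[OF L0 S _ m(2)] x S by blast
  ultimately show "y \<in> torus_box L x (card S * card S)" using torus_box_mono by blast
qed

lemma card_torus_box: "finite (torus_box L x n) \<and> card (torus_box L x n) \<le> (2 * n + 1)^2"
proof -
  let ?I = "{-int n..int n}"
  let ?f = "\<lambda>(i, j). (nat ((int (fst x) + i) mod int L), nat ((int (snd x) + j) mod int L))"
  have sub: "torus_box L x n \<subseteq> ?f ` (?I \<times> ?I)"
  proof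
    fix y assume "y \<in> torus_box L x n"
    then obtain i j where ij: "\<bar>i\<bar> \<le> int n" "\<bar>j\<bar> \<le> int n" "int (fst y) = (int (fst x) + i) mod int L"
      "int (snd y) = (int (snd x) + j) mod int L" unfolding torus_box_def by blast
    then have "y = ?f (i, j)" by (simp add: prod_eq_iff) (metis nat_int)
    then show "y \<in> ?f ` (?I \<times> ?I)" using ij(1,2) by force
  qed
  have "card (torus_box L x n) \<le> card (?f ` (?I \<times> ?I))" by (rule card_mono[OF _ sub]) simp
  also have "\<dots> \<le> card (?I \<times> ?I)" by (rule card_image_le) simp
  also have "\<dots> = (2 * n + 1)^2"
  proof -
    have "card ?I = 2 * n + 1" by simp
    then show ?thesis by (simp add: card_cartesian_product power2_eq_square)
  qed
  finally show ?thesis using finite_subset[OF sub] by simp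
qed

lemma card_configs_supported_in:
  assumes "finite B" "B \<subseteq> torus L"
  shows "finite {\<tau>\<in>Omega L. support L \<tau> \<subseteq> B} \<and> card {\<tau>\<in>Omega L. support L \<tau> \<subseteq> B} \<le> 3 ^ card B"
proof -
  let ?A = "{\<tau>\<in>Omega L. support L \<tau> \<subseteq> B}"
  let ?P = "PiE B (\<lambda>_. {-1, 0, 1::int})"
  have inj: "inj_on (\<lambda>\<tau>. restrict \<tau> B) ?A"
  proof (rule inj_onI, rule ext)
    fix s t y assume s: "s \<in> ?A" and t: "t \<in> ?A" and eq: "restrict s B = restrict t B"
    show "s y = t y"
    proof (cases "y \<in> B")
      case True then show ?thesis using eq by (metis restrict_apply')
    next
      case False
      show ?thesis
      proof (cases "y \<in> torus L")
        case True
        then have "s y = -1" "t y = -1" using s t False unfolding support_def by auto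
        then show ?thesis by simp
      next
        case False
        then show ?thesis using s t Omega_off[of s L y] Omega_off[of t L y] by simp
      qed
    qed
  qed
  have img: "(\<lambda>\<tau>. restrict \<tau> B) ` ?A \<subseteq> ?P" using assms(2) Omega_vals by (fastforce simp: PiE_def Pi_def)
  have "finite ?P" "card ?P = 3 ^ card B"
    using assms(1) by (simp_all add: finite_PiE card_PiE numeral_3_eq_3)
  then show ?thesis using inj_on_finite[OF inj img] card_inj_on_le[OF inj img] by simp
qed

lemma finite_Omega: "finite (Omega L)"
proof -
  have "Omega L = {\<tau>\<in>Omega L. support L \<tau> \<subseteq> torus L}" using support_subset_torus by blast
  then show ?thesis using card_configs_supported_in[of "torus L" L] by simp
qed

definition weight :: "real \<Rightarrow> real \<Rightarrow> nat \<Rightarrow> config \<Rightarrow> real" where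
  "weight h \<beta> L \<sigma> = exp (- \<beta> * excess_energy h L \<sigma>)"

lemma weight_pos: "0 < weight h \<beta> L \<sigma>"
  unfolding weight_def by simp

lemma weight_minus_one: "weight h \<beta> L (minus_one L) = 1"
  unfolding weight_def excess_energy_def by simp

lemma weight_le_exp: "0 \<le> \<beta> \<Longrightarrow> E \<le> excess_energy h L \<sigma> \<Longrightarrow> weight h \<beta> L \<sigma> \<le> exp (- \<beta> * E)"
  unfolding weight_def by (simp add: mult_left_mono)

text \<open>The box radius \<open>K\<^sup>2\<close> is a crude bound on the diameter of a connected support of \<open>K\<close> sites;
  it keeps the number of clusters linear in the volume.\<close>

definition clusters :: "nat \<Rightarrow> nat \<Rightarrow> config set" where
  "clusters L K = {\<tau>\<in>Omega L. 1 \<le> card (support L \<tau>) \<and> card (support L \<tau>) \<le> K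
     \<and> (\<exists>x\<in>torus L. support L \<tau> \<subseteq> torus_box L x (K * K))}"

definition excitations :: "nat \<Rightarrow> nat \<Rightarrow> config set" where
  "excitations L k = {\<sigma>\<in>Omega L. \<sigma> \<noteq> minus_one L \<and> card (support L \<sigma>) \<le> k}"

lemma finite_clusters: "finite (clusters L K)"
  using finite_Omega by (rule rev_finite_subset) (auto simp: clusters_def)

lemma finite_excitations: "finite (excitations L k)"
  using finite_Omega by (rule rev_finite_subset) (auto simp: excitations_def)

lemma excitations_0: "excitations L 0 = {}"
  unfolding excitations_def using support_empty_imp_minus_one by auto

lemma minus_one_notin_excitations: "minus_one L \<notin> excitations L k"
  unfolding excitations_def by simp

lemma card_clusters: "card (clusters L K) \<le> card (torus L) * 3 ^ ((2 * (K * K) + 1)^2)"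
proof -
  let ?M = "(2 * (K * K) + 1)^2"
  let ?A = "\<lambda>x. {\<tau>\<in>Omega L. support L \<tau> \<subseteq> torus_box L x (K * K) \<inter> torus L}"
  have sub: "clusters L K \<subseteq> (\<Union>x\<in>torus L. ?A x)"
    unfolding clusters_def using support_subset_torus by fastforce
  have fA: "finite (?A x)" and cA: "card (?A x) \<le> 3 ^ ?M" for x
  proof -
    have fb: "finite (torus_box L x (K * K) \<inter> torus L)" by simp
    have "card (torus_box L x (K * K) \<inter> torus L) \<le> ?M"
      using card_torus_box[of L x "K * K"] card_mono[of "torus_box L x (K * K)"] by (meson Int_lower1 order.trans)
    then have "3 ^ card (torus_box L x (K * K) \<inter> torus L) \<le> (3::nat) ^ ?M"
      by (intro power_increasing) auto
    with card_configs_supported_in[OF fb Int_lower2]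
    show "finite (?A x)" "card (?A x) \<le> 3 ^ ?M" by (blast, meson order.trans)
  qed
  have "card (clusters L K) \<le> card (\<Union>x\<in>torus L. ?A x)" using sub fA by (intro card_mono) auto
  also have "\<dots> \<le> (\<Sum>x\<in>torus L. card (?A x))" by (rule card_UN_le) simp
  also have "\<dots> \<le> (\<Sum>x\<in>torus L. 3 ^ ?M)" by (rule sum_mono) (rule cA)
  finally show ?thesis by simp
qed

lemma sum_weight_clusters_le:
  fixes h \<beta> :: real and n :: nat
  assumes h: "0 \<le> h" "h * n \<le> 2" and L: "n * (n + 1) < L" "3 \<le> L" and \<beta>: "0 \<le> \<beta>"
  shows "(\<Sum>\<tau>\<in>clusters L (n * (n + 1)). weight h \<beta> L \<tau>)
    \<le> real (card (torus L)) * 3 ^ ((2 * (n * (n + 1) * (n * (n + 1))) + 1)^2) * exp (- 2 * \<beta>)"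
proof -
  let ?K = "n * (n + 1)"
  have "weight h \<beta> L \<tau> \<le> exp (- \<beta> * 2)" if "\<tau> \<in> clusters L ?K" for \<tau>
    using that L unfolding clusters_def
    by (intro weight_le_exp[OF \<beta>] excess_energy_ge_2[OF L(2) _ _ _ _ h]) auto
  then have "(\<Sum>\<tau>\<in>clusters L ?K. weight h \<beta> L \<tau>) \<le> real (card (clusters L ?K)) * exp (- 2 * \<beta>)"
    using sum_mono[of "clusters L ?K" "weight h \<beta> L" "\<lambda>_. exp (- \<beta> * 2)"] by (simp add: mult.commute)
  also have "\<dots> \<le> real (card (torus L) * 3 ^ ((2 * (?K * ?K) + 1)^2)) * exp (- 2 * \<beta>)"
    using card_clusters[of L ?K] by (intro mult_right_mono) (simp only: of_nat_le_iff, simp)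
  finally show ?thesis by simp
qed

lemma insert_minus_one_excitations:
  "insert (minus_one L) (excitations L k) = {\<tau>\<in>Omega L. card (support L \<tau>) \<le> k}"
  unfolding excitations_def using minus_one_in_Omega support_minus_one by auto

definition first_component :: "nat \<Rightarrow> config \<Rightarrow> site set" where
  "first_component L \<sigma> = component L (support L \<sigma>) (SOME x. x \<in> support L \<sigma>)"

definition split_config :: "nat \<Rightarrow> config \<Rightarrow> config \<times> config" where
  "split_config L \<sigma> = (restrict_config L \<sigma> (first_component L \<sigma>),
     restrict_config L \<sigma> (support L \<sigma> - first_component L \<sigma>))"

lemma first_component:
  assumes "\<sigma> \<in> Omega L" "\<sigma> \<noteq> minus_one L"
  obtains x where "x \<in> support L \<sigma>" "first_component L \<sigma> = component L (support L \<sigma>) x"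
proof -
  have "support L \<sigma> \<noteq> {}" using assms support_empty_imp_minus_one by blast
  then have "(SOME x. x \<in> support L \<sigma>) \<in> support L \<sigma>" by (simp add: some_in_eq)
  then show ?thesis using that unfolding first_component_def by blast
qed

lemma split_config_inj: "inj_on (split_config L) (Omega L - {minus_one L})"
proof (rule inj_onI)
  fix s t assume s: "s \<in> Omega L - {minus_one L}" and t: "t \<in> Omega L - {minus_one L}"
    and eq: "split_config L s = split_config L t"
  have AS: "first_component L s \<subseteq> support L s" "first_component L t \<subseteq> support L t"
    using first_component[of s L] first_component[of t L] s t component_subset by (metis DiffE insertI1)+
  have eq1: "restrict_config L s (first_component L s) = restrict_config L t (first_component L t)"
    and eq2: "restrict_config L s (support L s - first_component L s)
      = restrict_config L t (support L t - first_component L t)"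
    using eq unfolding split_config_def by simp_all
  have "s = (\<lambda>y. if restrict_config L s (first_component L s) y \<noteq> -1 then restrict_config L s (first_component L s) y
      else restrict_config L s (support L s - first_component L s) y)"
    using s AS(1) by (intro restrict_config_recombine) auto
  also have "\<dots> = t"
    unfolding eq1 eq2 using t AS(2) by (intro restrict_config_recombine[symmetric]) auto
  finally show "s = t" .
qed

lemma sum_weight_excitations_Suc_le:
  assumes L0: "0 < L" and kK: "Suc k \<le> K"
  shows "(\<Sum>\<sigma>\<in>excitations L (Suc k). weight h \<beta> L \<sigma>)
    \<le> (\<Sum>\<tau>\<in>clusters L K. weight h \<beta> L \<tau>) * (\<Sum>\<tau>\<in>insert (minus_one L) (excitations L k). weight h \<beta> L \<tau>)"
proof -
  let ?g = "\<lambda>p. weight h \<beta> L (fst p) * weight h \<beta> L (snd p)"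
  let ?V = "insert (minus_one L) (excitations L k)"
  have split: "weight h \<beta> L \<sigma> = ?g (split_config L \<sigma>) \<and> split_config L \<sigma> \<in> clusters L K \<times> ?V"
    if \<sigma>: "\<sigma> \<in> excitations L (Suc k)" for \<sigma>
  proof -
    let ?S = "support L \<sigma>" and ?A = "first_component L \<sigma>"
    have om: "\<sigma> \<in> Omega L" and cS: "card ?S \<le> Suc k" and ne: "\<sigma> \<noteq> minus_one L"
      using \<sigma> unfolding excitations_def by auto
    obtain x where x: "x \<in> ?S" and A: "?A = component L ?S x" using first_component[OF om ne] .
    have AS: "?A \<subseteq> ?S" unfolding A by (rule component_subset[OF x])
    have cA: "1 \<le> card ?A" using self_in_component[of x L ?S] AS unfolding A
      by (metis One_nat_def Suc_leI card_gt_0_iff empty_iff finite_subset finite_support)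
    have St: "?S \<subseteq> torus L" by (rule support_subset_torus)
    have "excess_energy h L \<sigma>
        = excess_energy h L (restrict_config L \<sigma> ?A) + excess_energy h L (restrict_config L \<sigma> (?S - ?A))"
      by (rule excess_energy_split[OF L0 om AS]) (use component_closed[OF x] in \<open>auto simp: A\<close>)
    then have "weight h \<beta> L \<sigma> = ?g (split_config L \<sigma>)"
      by (simp add: split_config_def weight_def algebra_simps exp_add[symmetric])
    moreover have "fst (split_config L \<sigma>) \<in> clusters L K"
    proof -
      have "?A \<subseteq> torus_box L x (card ?S * card ?S)" unfolding A by (rule component_subset_torus_box[OF L0 St x])
      also have "\<dots> \<subseteq> torus_box L x (K * K)" using cS kK by (intro torus_box_mono mult_mono) auto
      finally have "?A \<subseteq> torus_box L x (K * K)" .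
      moreover have "card ?A \<le> K" using card_mono[OF finite_support AS] cS kK by linarith
      ultimately show ?thesis
        unfolding clusters_def split_config_def
        using x St cA restrict_config_in_Omega[OF om] AS by (auto simp: support_restrict_config[OF AS])
    qed
    moreover have "snd (split_config L \<sigma>) \<in> ?V"
    proof -
      have "card (?S - ?A) \<le> k" using card_Diff_subset[OF finite_subset[OF AS] AS] cS cA by simp
      then show ?thesis unfolding insert_minus_one_excitations split_config_def
        using restrict_config_in_Omega[OF om] St support_restrict_config[of "?S - ?A" L \<sigma>] by auto
    qed
    ultimately show ?thesis by (simp add: mem_Times_iff)
  qed
  have inj: "inj_on (split_config L) (excitations L (Suc k))"
    by (rule inj_on_subset[OF split_config_inj]) (auto simp: excitations_def)
  have "(\<Sum>\<sigma>\<in>excitations L (Suc k). weight h \<beta> L \<sigma>) = (\<Sum>\<sigma>\<in>excitations L (Suc k). ?g (split_config L \<sigma>))"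
    using split by (intro sum.cong) auto
  also have "\<dots> = (\<Sum>p\<in>split_config L ` excitations L (Suc k). ?g p)"
    by (simp add: sum.reindex[OF inj])
  also have "\<dots> \<le> (\<Sum>p\<in>clusters L K \<times> ?V. ?g p)"
  proof (rule sum_mono2)
    show "finite (clusters L K \<times> ?V)" using finite_clusters finite_excitations by simp
    show "split_config L ` excitations L (Suc k) \<subseteq> clusters L K \<times> ?V" using split by blast
    show "0 \<le> ?g p" for p using weight_pos by (simp add: less_imp_le)
  qed
  also have "\<dots> = (\<Sum>\<tau>\<in>clusters L K. weight h \<beta> L \<tau>) * (\<Sum>\<tau>\<in>?V. weight h \<beta> L \<tau>)"
    by (simp add: sum_product sum.cartesian_product split_beta)
  finally show ?thesis .
qed

lemma sum_weight_excitations_le: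
  assumes L0: "0 < L" and Q: "(\<Sum>\<tau>\<in>clusters L K. weight h \<beta> L \<tau>) \<le> 1/2" and kK: "k \<le> K"
  shows "(\<Sum>\<sigma>\<in>excitations L k. weight h \<beta> L \<sigma>) \<le> 2 * (\<Sum>\<tau>\<in>clusters L K. weight h \<beta> L \<tau>)"
  using kK
proof (induct k)
  case 0
  then show ?case using weight_pos by (simp add: excitations_0 sum_nonneg less_imp_le)
next
  case (Suc k)
  let ?Q = "\<Sum>\<tau>\<in>clusters L K. weight h \<beta> L \<tau>"
  have Q0: "0 \<le> ?Q" using weight_pos by (simp add: sum_nonneg less_imp_le)
  have "(\<Sum>\<sigma>\<in>excitations L (Suc k). weight h \<beta> L \<sigma>)
      \<le> ?Q * (1 + (\<Sum>\<sigma>\<in>excitations L k. weight h \<beta> L \<sigma>))"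
    using sum_weight_excitations_Suc_le[OF L0 Suc.prems, of h \<beta>]
    by (simp add: finite_excitations minus_one_notin_excitations weight_minus_one)
  also have "\<dots> \<le> ?Q * (1 + 2 * ?Q)" using Suc Q0 by (intro mult_left_mono) auto
  also have "\<dots> \<le> 2 * ?Q" using Q Q0 mult_left_mono[of "2 * ?Q" 1 ?Q] by (simp add: algebra_simps)
  finally show ?case .
qed

definition rect_flips :: "real \<Rightarrow> nat \<Rightarrow> config set" where
  "rect_flips h L = {flip \<sigma> x s | \<sigma> x s. \<sigma> \<in> Rset h L \<and> x \<in> torus L \<and> s \<in> {1, -1}}"

lemma card_rect_flips: "finite (rect_flips h L) \<and> card (rect_flips h L) \<le> 4 * card (torus L) ^ 2"
proof -
  let ?O = "{(n0 h, n0 h + 1), (n0 h + 1, n0 h)}"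
  let ?I = "{..<L} \<times> {..<L} \<times> ?O \<times> torus L \<times> {1::int, -1}"
  let ?f = "\<lambda>(a, b, wv, x, s). flip (rect_config L a b (fst wv) (snd wv)) x s"
  have sub: "rect_flips h L \<subseteq> ?f ` ?I"
  proof
    fix \<tau> assume "\<tau> \<in> rect_flips h L"
    then obtain \<sigma> x s where \<tau>: "\<tau> = flip \<sigma> x s" "\<sigma> \<in> Rset h L" "x \<in> torus L" "s \<in> {1, -1}"
      unfolding rect_flips_def by blast
    obtain a b w v where "a < L" "b < L" "(w = n0 h \<and> v = n0 h + 1) \<or> (w = n0 h + 1 \<and> v = n0 h)"
      "\<sigma> = rect_config L a b w v"
      using Rset_imp_rect_config[OF \<tau>(2)] .
    then show "\<tau> \<in> ?f ` ?I" using \<tau> by (intro image_eqI[of _ _ "(a, b, (w, v), x, s)"]) auto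
  qed
  have "card (rect_flips h L) \<le> card ?I"
    using card_mono[OF _ sub] card_image_le[of ?I ?f] by fastforce
  also have "\<dots> = L * (L * (card ?O * (card (torus L) * 2)))"
    by (simp add: card_cartesian_product)
  also have "\<dots> \<le> L * (L * (2 * (card (torus L) * 2)))"
  proof -
    have "card ?O \<le> 2" by (simp add: card_insert_if)
    then show ?thesis by (intro mult_left_mono mult_right_mono) auto
  qed
  also have "\<dots> = 4 * card (torus L) ^ 2" by (simp add: card_torus power2_eq_square)
  finally show ?thesis using finite_subset[OF sub] by simp
qed

lemma valley_minus_subset:
  "(valley h L - {minus_one L}) \<inter> Omega L \<subseteq> excitations L (n0 h * (n0 h + 1)) \<union> (rect_flips h L \<inter> Omega L)"
  unfolding valley_def rect_flips_def excitations_def Ncount_eq_card_support by blast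

lemma mu_ratio_eq_sum_weight:
  assumes "0 < L"
  shows "mu h \<beta> L X / mu h \<beta> L {minus_one L} = (\<Sum>\<sigma>\<in>X \<inter> Omega L. weight h \<beta> L \<sigma>)"
proof -
  define c where "c = exp (- \<beta> * Ham h L (minus_one L))"
  have Ham: "exp (- \<beta> * Ham h L \<sigma>) = weight h \<beta> L \<sigma> * c" for \<sigma>
    unfolding weight_def excess_energy_def c_def by (simp add: algebra_simps exp_add[symmetric])
  have "0 < Zpart h \<beta> L"
    unfolding Zpart_def using finite_Omega minus_one_in_Omega by (intro sum_pos2) auto
  moreover have "mu h \<beta> L {minus_one L} = c / Zpart h \<beta> L"
    unfolding mu_def c_def using minus_one_in_Omega by simp
  moreover have "mu h \<beta> L X = (\<Sum>\<sigma>\<in>X \<inter> Omega L. weight h \<beta> L \<sigma>) * c / Zpart h \<beta> L"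
    unfolding mu_def Ham by (simp add: sum_distrib_right)
  ultimately show ?thesis by (simp add: c_def)
qed

lemma n0_ge_2: "0 < h \<Longrightarrow> h < 1 \<Longrightarrow> 2 \<le> n0 h"
  unfolding n0_def by (simp add: le_nat_iff le_floor_iff field_simps)

lemma field_times_n0_le_2:
  assumes "0 < h"
  shows "h * real (n0 h) \<le> 2"
proof -
  have "real (n0 h) \<le> 2 / h" unfolding n0_def using assms by simp
  then show ?thesis using assms by (simp add: field_simps)
qed

lemma mu_ratio_nonneg: "0 < L \<Longrightarrow> 0 \<le> mu h \<beta> L X / mu h \<beta> L {minus_one L}"
  unfolding mu_ratio_eq_sum_weight using weight_pos by (simp add: sum_nonneg less_imp_le)

lemma sum_weight_rect_flips_le:
  assumes h: "0 < h" "h < 1" and L: "n0 h * (n0 h + 1) + 2 \<le> L" and \<beta>: "0 \<le> \<beta>"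
  shows "(\<Sum>\<sigma>\<in>rect_flips h L \<inter> Omega L. weight h \<beta> L \<sigma>) \<le> 4 * (real (card (torus L)) * exp (- 2 * \<beta>))^2"
proof -
  let ?F = "rect_flips h L \<inter> Omega L"
  have "weight h \<beta> L \<tau> \<le> exp (- \<beta> * 4)" if flip: "\<tau> \<in> rect_flips h L" for \<tau>
  proof -
    obtain \<sigma> x s where \<tau>: "\<tau> = flip \<sigma> x s" "\<sigma> \<in> Rset h L" "x \<in> torus L" "s \<in> {1, -1}"
      using flip unfolding rect_flips_def by blast
    obtain a b w v where "a < L" "b < L" and wv: "(w = n0 h \<and> v = n0 h + 1) \<or> (w = n0 h + 1 \<and> v = n0 h)"
      and \<sigma>: "\<sigma> = rect_config L a b w v"
      by (rule Rset_imp_rect_config[OF \<tau>(2)])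
    have "4 \<le> excess_energy h L \<tau>"
      unfolding \<tau>(1) \<sigma> using L h
      by (intro excess_energy_flip_rect_ge_4[OF _ n0_ge_2[OF h] _ _ field_times_n0_le_2 wv \<tau>(3,4)]) auto
    then show ?thesis by (rule weight_le_exp[OF \<beta>])
  qed
  then have "(\<Sum>\<sigma>\<in>?F. weight h \<beta> L \<sigma>) \<le> real (card ?F) * exp (- \<beta> * 4)"
    using sum_mono[of ?F "weight h \<beta> L" "\<lambda>_. exp (- \<beta> * 4)"] by simp
  also have "\<dots> \<le> real (4 * card (torus L) ^ 2) * exp (- \<beta> * 4)"
  proof -
    have "card ?F \<le> 4 * card (torus L) ^ 2"
      using card_rect_flips[of h L] card_mono[of "rect_flips h L" ?F] by (meson Int_lower1 order.trans)
    then show ?thesis by (intro mult_right_mono) (simp_all only: of_nat_le_iff, simp)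
  qed
  also have "\<dots> = 4 * (real (card (torus L)) * exp (- 2 * \<beta>))^2"
    by (simp add: power2_eq_square algebra_simps exp_add[symmetric])
  finally show ?thesis .
qed

text \<open>\<open>3\<close> to the number of sites of a box of radius \<open>K\<^sup>2\<close>, \<open>K = n\<^sub>0 (n\<^sub>0 + 1)\<close>: it bounds the number of
  clusters based at a given site.\<close>

definition cluster_entropy :: "real \<Rightarrow> real" where
  "cluster_entropy h = 3 ^ ((2 * (n0 h * (n0 h + 1) * (n0 h * (n0 h + 1))) + 1)^2)"

lemma sum_weight_subcritical_le:
  assumes h: "0 < h" "h < 1" and L: "n0 h * (n0 h + 1) + 2 \<le> L" and \<beta>: "0 \<le> \<beta>"
    and small: "cluster_entropy h * (real (card (torus L)) * exp (- 2 * \<beta>)) \<le> 1/2"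
  shows "(\<Sum>\<sigma>\<in>excitations L (n0 h * (n0 h + 1)). weight h \<beta> L \<sigma>)
    \<le> 2 * (cluster_entropy h * (real (card (torus L)) * exp (- 2 * \<beta>)))"
proof -
  let ?K = "n0 h * (n0 h + 1)" and ?w = "weight h \<beta> L"
  have L0: "0 < L" and L3: "3 \<le> L" and KL: "?K < L" using L n0_ge_2[OF h] by auto
  have clusters: "(\<Sum>\<tau>\<in>clusters L ?K. ?w \<tau>) \<le> cluster_entropy h * (real (card (torus L)) * exp (- 2 * \<beta>))"
    using sum_weight_clusters_le[OF _ field_times_n0_le_2[OF h(1)] KL L3 \<beta>] h
    by (simp add: cluster_entropy_def algebra_simps)
  then have "(\<Sum>\<tau>\<in>clusters L ?K. ?w \<tau>) \<le> 1/2" using small by linarith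
  then have "(\<Sum>\<sigma>\<in>excitations L ?K. ?w \<sigma>) \<le> 2 * (\<Sum>\<tau>\<in>clusters L ?K. ?w \<tau>)"
    by (rule sum_weight_excitations_le[OF L0 _ order.refl])
  with clusters show ?thesis by linarith
qed

lemma valley_ratio_le:
  assumes h: "0 < h" "h < 1" and L: "n0 h * (n0 h + 1) + 2 \<le> L" and \<beta>: "0 \<le> \<beta>"
    and small: "cluster_entropy h * (real (card (torus L)) * exp (- 2 * \<beta>)) \<le> 1/2"
  shows "mu h \<beta> L (valley h L - {minus_one L}) / mu h \<beta> L {minus_one L}
    \<le> (2 * cluster_entropy h + 4) * (real (card (torus L)) * exp (- 2 * \<beta>))"
proof -
  define B where "B = real (card (torus L)) * exp (- 2 * \<beta>)"
  let ?E = "excitations L (n0 h * (n0 h + 1))" and ?F = "rect_flips h L \<inter> Omega L" and ?w = "weight h \<beta> L"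
  have L0: "0 < L" using L by simp
  have B0: "0 \<le> B" by (simp add: B_def)
  have "1 \<le> cluster_entropy h" unfolding cluster_entropy_def by simp
  then have "B \<le> cluster_entropy h * B" using mult_right_mono[OF _ B0] by fastforce
  then have "B \<le> 1" using small[folded B_def] by linarith
  then have flips: "(\<Sum>\<sigma>\<in>?F. ?w \<sigma>) \<le> 4 * B"
    using sum_weight_rect_flips_le[OF h L \<beta>] B0 mult_left_mono[of B 1 B]
    by (simp add: B_def power2_eq_square)
  have fF: "finite ?F" using card_rect_flips by blast
  have "mu h \<beta> L (valley h L - {minus_one L}) / mu h \<beta> L {minus_one L}
      = (\<Sum>\<sigma>\<in>(valley h L - {minus_one L}) \<inter> Omega L. ?w \<sigma>)"
    by (rule mu_ratio_eq_sum_weight[OF L0])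
  also have "\<dots> \<le> (\<Sum>\<sigma>\<in>?E \<union> ?F. ?w \<sigma>)"
    using finite_excitations fF valley_minus_subset weight_pos by (intro sum_mono2) (auto intro: less_imp_le)
  also have "\<dots> \<le> (\<Sum>\<sigma>\<in>?E. ?w \<sigma>) + (\<Sum>\<sigma>\<in>?F. ?w \<sigma>)"
  proof -
    have "0 \<le> (\<Sum>\<sigma>\<in>?E \<inter> ?F. ?w \<sigma>)" using weight_pos by (simp add: sum_nonneg less_imp_le)
    then show ?thesis using sum.union_inter[OF finite_excitations[of L "n0 h * (n0 h + 1)"] fF, of ?w] by linarith
  qed
  also have "\<dots> \<le> (2 * cluster_entropy h + 4) * B"
    using sum_weight_subcritical_le[OF h L \<beta> small] flips unfolding B_def by (simp add: algebra_simps)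
  finally show ?thesis unfolding B_def .
qed

theorem lemma8p2:
  fixes h :: real and L :: "real \<Rightarrow> nat"
  assumes "0 < h" and "h < 1" and "2 / h \<notin> \<int>"
    and "\<And>\<beta>. \<beta> > 0 \<Longrightarrow> L \<beta> \<ge> n0 h * (n0 h + 1) + 2"
    and "((\<lambda>\<beta>. real (card (torus (L \<beta>))) * exp (-2 * \<beta>)) \<longlongrightarrow> 0) at_top"
  shows "\<exists>C0::real. (\<forall>\<beta>\<ge>C0.
            mu h \<beta> (L \<beta>) (valley h (L \<beta>) - {minus_one (L \<beta>)}) / mu h \<beta> (L \<beta>) {minus_one (L \<beta>)}
              \<le> C0 * real (card (torus (L \<beta>))) * exp (-2 * \<beta>)) \<and>
         ((\<lambda>\<beta>. mu h \<beta> (L \<beta>) (valley h (L \<beta>) - {minus_one (L \<beta>)}) / mu h \<beta> (L \<beta>) {minus_one (L \<beta>)})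
           \<longlongrightarrow> 0) at_top"
proof -
  define B where "B \<beta> = real (card (torus (L \<beta>))) * exp (-2 * \<beta>)" for \<beta>
  define R where "R \<beta> = mu h \<beta> (L \<beta>) (valley h (L \<beta>) - {minus_one (L \<beta>)}) / mu h \<beta> (L \<beta>) {minus_one (L \<beta>)}"
    for \<beta>
  let ?C = "cluster_entropy h"
  have "((\<lambda>\<beta>. ?C * B \<beta>) \<longlongrightarrow> 0) at_top"
    using tendsto_mult_right_zero[OF assms(5)] unfolding B_def .
  then obtain \<beta>0 where small: "\<And>\<beta>. \<beta> \<ge> \<beta>0 \<Longrightarrow> ?C * B \<beta> \<le> 1/2"
    using order_tendstoD(2)[of _ 0 _ "1/2"] by (fastforce simp: eventually_at_top_linorder)
  define C0 where "C0 = max (max \<beta>0 1) (2 * ?C + 4)"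
  have bound: "0 \<le> R \<beta> \<and> R \<beta> \<le> C0 * B \<beta>" if "C0 \<le> \<beta>" for \<beta>
  proof -
    have \<beta>: "1 \<le> \<beta>" "\<beta>0 \<le> \<beta>" using that by (auto simp: C0_def)
    have L: "n0 h * (n0 h + 1) + 2 \<le> L \<beta>" using assms(4) \<beta> by simp
    have "R \<beta> \<le> (2 * ?C + 4) * B \<beta>"
      using valley_ratio_le[OF assms(1,2) L _ small[OF \<beta>(2), unfolded B_def]] \<beta> unfolding R_def B_def by simp
    also have "\<dots> \<le> C0 * B \<beta>" by (intro mult_right_mono) (auto simp: C0_def B_def)
    finally show ?thesis using mu_ratio_nonneg L unfolding R_def by simp
  qed
  have "(R \<longlongrightarrow> 0) at_top"
  proof (rule tendsto_sandwich[OF _ _ tendsto_const])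
    show "\<forall>\<^sub>F \<beta> in at_top. 0 \<le> R \<beta>" "\<forall>\<^sub>F \<beta> in at_top. R \<beta> \<le> C0 * B \<beta>"
      using bound by (auto simp: eventually_at_top_linorder)
    show "((\<lambda>\<beta>. C0 * B \<beta>) \<longlongrightarrow> 0) at_top"
      using tendsto_mult_right_zero[OF assms(5)] unfolding B_def .
  qed
  moreover have "\<forall>\<beta>\<ge>C0. R \<beta> \<le> C0 * real (card (torus (L \<beta>))) * exp (-2 * \<beta>)"
    using bound unfolding B_def by (simp add: mult.assoc)
  ultimately show ?thesis unfolding R_def by blast
qed

end
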